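(* Let $g(q)\in\mathbb Z[q]$ and let $x_n,y_n$ ($n\ge1$) be indeterminates. Define elements $\mathsf S_n,\mathsf P_n,\mathsf I_n$ ($n\ge1$) of $\mathbb Q[q][x_d,y_d:d\ge1]$ recursively by the relations, for all $n\ge1$, $$\sum_{d|n}d\Big[\tfrac nd\Big]_{g(q)}\mathsf S_d^{\,n/d}=\sum_{d|n}d\Big[\tfrac nd\Big]_{g(q)}x_d^{\,n/d}+\sum_{d|n}d\Big[\tfrac nd\Big]_{g(q)}y_d^{\,n/d},$$ $$\sum_{d|n}d\Big[\tfrac nd\Big]_{g(q)}\mathsf P_d^{\,n/d}=(1-g(q))\Big(\sum_{d|n}d\Big[\tfrac nd\Big]_{g(q)}x_d^{\,n/d}\Big)\Big(\sum_{d|n}d\Big[\tfrac nd\Big]_{g(q)}y_d^{\,n/d}\Big),$$ $$\sum_{d|n}d\Big[\tfrac nd\Big]_{g(q)}x_d^{\,n/d}+\sum_{d|n}d\Big[\tfrac nd\Big]_{g(q)}\mathsf I_d^{\,n/d}=0.$$ Then for every $n\ge1$, $\mathsf S_n,\mathsf P_n\in\mathbb Z[g(q)][x_d,y_d:d\mid n]$ and $\mathsf I_n\in\mathbb Z[g(q)][x_d:d\mid n]$.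
   Context: For a polynomial $g(q)\in\mathbb Z[q]$ and a positive integer $n$, $[n]_{g(q)}:=1+g(q)+g(q)^2+\cdots+g(q)^{n-1}$. $\mathbb Z[g(q)]$ denotes the subring of $\mathbb Z[q]$ generated by $g(q)$. (The recursions determine $\mathsf S_n,\mathsf P_n,\mathsf I_n$ uniquely since the term with $d=n$ has coefficient $n$.) *)

theory Defs
  imports "HOL-Computational_Algebra.Polynomial" "HOL-Library.Poly_Mapping"
begin

datatype var = X nat | Y nat

text \<open>The polynomial ring Q[q][x_d, y_d : d >= 1]: finitely supported maps from
  monomials (finitely supported exponent vectors) to coefficients in Q[q].\<close>
type_synonym mpoly = "(var \<Rightarrow>\<^sub>0 nat) \<Rightarrow>\<^sub>0 rat poly"

definition Const :: "rat poly \<Rightarrow> mpoly" where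
  "Const c = Poly_Mapping.single 0 c"

definition Var :: "var \<Rightarrow> mpoly" where
  "Var v = Poly_Mapping.single (Poly_Mapping.single v 1) 1"

definition qint :: "int poly \<Rightarrow> nat \<Rightarrow> rat poly" where
  "qint g n = (\<Sum>i<n. (map_poly of_int g) ^ i)"

definition ghost :: "int poly \<Rightarrow> (nat \<Rightarrow> mpoly) \<Rightarrow> nat \<Rightarrow> mpoly" where
  "ghost g F n = (\<Sum>d\<in>{d. d dvd n}. of_nat d * Const (qint g (n div d)) * F d ^ (n div d))"

text \<open>Z[g(q)], the subring of Z[q] generated by g(q), embedded in Q[q].\<close>
definition Zg :: "int poly \<Rightarrow> rat poly set" where
  "Zg g = {map_poly of_int (pcompose h g) | h. True}"

definition in_Zg_poly :: "int poly \<Rightarrow> var set \<Rightarrow> mpoly \<Rightarrow> bool" where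
  "in_Zg_poly g V p \<longleftrightarrow>
     (\<forall>m\<in>Poly_Mapping.keys p. Poly_Mapping.keys m \<subseteq> V) \<and>
     (\<forall>m\<in>Poly_Mapping.keys p. Poly_Mapping.lookup p m \<in> Zg g)"

end

theory Submission
  imports Defs "HOL-Computational_Algebra.Formal_Power_Series"
begin

text \<open>Write t for g(q) and A for Z[t][x_d, y_d]. For a in A the series
  H_a = 1 + (1 - t)(a x + a^2 x^2 + ...) = (1 - t a x) / (1 - a x) is congruent to 1 modulo 1 - t,
  and its logarithmic derivative x H_a' / H_a is (1 - t) sum_n [n]_t a^n x^n; substituting x^d for x
  multiplies the n-th coefficient by d. Hence, up to the factor 1 - t, the ghost components of a
  sequence (F_d) in A are the coefficients of the logarithmic derivative of the product of the
  H_(F_d)(x^d). Call a sequence integral if it arises in this way from some series congruent to 1.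
  Integral sequences form an additive group (products and inverses of series), and they are closed
  under the product defining P because (1 - t) d[n/d]_t a^(n/d) e[n/e]_t b^(n/e) is gcd(d, e) times
  a sum of differences of ghost terms at level lcm(d, e).

  Conversely, if the ghost sequence of F is integral and F_1, ..., F_(n-1) lie in A, removing the
  contribution of F_1, ..., F_(n-1) leaves a series congruent to 1 whose first nonconstant coefficient
  is (1 - t) F_n, so F_n lies in A. For t = 1 the ghost components are n sum_(d|n) F_d^(n/d) and
  integrality is immediate. The same triangular recursion controls which variables occur.\<close>

section \<open>Coefficients in Z[g]\<close>

lemma Const_mult: "Const (a * b) = Const a * Const b"
  by (simp add: Const_def mult_single)

lemma Const_diff: "Const (a - b) = Const a - Const b"
  by (simp add: Const_def single_diff)

lemma Const_one [simp]: "Const 1 = 1"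
  by (simp add: Const_def)

lemma Const_power: "Const (a ^ k) = Const a ^ k"
  by (induct k) (simp_all add: Const_mult)

lemma Const_sum: "Const (sum f A) = (\<Sum>x\<in>A. Const (f x))"
  by (induct A rule: infinite_finite_induct) (simp_all add: Const_def single_add)

lemma Const_of_nat: "Const (of_nat k) = of_nat k"
  by (simp add: Const_def)

lemma lookup_Const_mult: "Poly_Mapping.lookup (Const c * p) m = c * Poly_Mapping.lookup p m"
  unfolding Const_def mult_map_scale_conv_mult[symmetric]
  by (simp add: Poly_Mapping.map.rep_eq when_def)

lemma Const_mult_cancel:
  assumes "Const c * p = Const c * q" "c \<noteq> 0"
  shows "p = q"
proof (rule poly_mapping_eqI)
  fix m
  have "c * Poly_Mapping.lookup p m = c * Poly_Mapping.lookup q m"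
    using arg_cong[OF assms(1), of "\<lambda>r. Poly_Mapping.lookup r m"] by (simp only: lookup_Const_mult)
  then show "Poly_Mapping.lookup p m = Poly_Mapping.lookup q m"
    using assms(2) by simp
qed

lemma of_nat_mult_cancel_mpoly:
  assumes "of_nat k * p = of_nat k * (q :: mpoly)" "k > 0"
  shows "p = q"
proof (rule Const_mult_cancel)
  show "Const (of_nat k) * p = Const (of_nat k) * q"
    using assms(1) by (simp only: Const_of_nat)
  show "(of_nat k :: rat poly) \<noteq> 0"
    using assms(2) by simp
qed

lemma map_poly_of_int_add:
  "map_poly (of_int :: int \<Rightarrow> rat) (p + q) = map_poly of_int p + map_poly of_int q"
  by (rule poly_eqI) (simp add: coeff_map_poly)

lemma map_poly_of_int_mult:
  "map_poly (of_int :: int \<Rightarrow> rat) (p * q) = map_poly of_int p * map_poly of_int q"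
  by (rule poly_eqI) (simp add: coeff_map_poly coeff_mult)

lemma map_poly_of_int_uminus:
  "map_poly (of_int :: int \<Rightarrow> rat) (- p) = - map_poly of_int p"
  by (rule poly_eqI) (simp add: coeff_map_poly)

lemma Zg_add: "a \<in> Zg g \<Longrightarrow> b \<in> Zg g \<Longrightarrow> a + b \<in> Zg g"
  unfolding Zg_def by (auto simp flip: map_poly_of_int_add pcompose_add)

lemma Zg_mult: "a \<in> Zg g \<Longrightarrow> b \<in> Zg g \<Longrightarrow> a * b \<in> Zg g"
  unfolding Zg_def by (auto simp flip: map_poly_of_int_mult pcompose_mult)

lemma Zg_uminus: "a \<in> Zg g \<Longrightarrow> - a \<in> Zg g"
  unfolding Zg_def by (auto simp flip: map_poly_of_int_uminus pcompose_uminus)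

lemma Zg_of_int: "of_int c \<in> Zg g"
proof -
  have "of_int c = map_poly (of_int :: int \<Rightarrow> rat) (pcompose [:c:] g)"
    by (simp add: map_poly_pCons of_int_poly)
  then show ?thesis
    unfolding Zg_def by blast
qed

lemma Zg_generator: "map_poly of_int g \<in> Zg g"
proof -
  have "map_poly of_int g = map_poly (of_int :: int \<Rightarrow> rat) (pcompose [:0, 1:] g)"
    by (simp add: pcompose_pCons)
  then show ?thesis
    unfolding Zg_def by blast
qed

lemma Zg_zero: "0 \<in> Zg g"
  using Zg_of_int[of 0] by simp

lemma Zg_one: "1 \<in> Zg g"
  using Zg_of_int[of 1] by simp

lemma Zg_sum:
  assumes "\<And>x. x \<in> A \<Longrightarrow> f x \<in> Zg g"
  shows "sum f A \<in> Zg g"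
  using assms
proof (induct A rule: infinite_finite_induct)
  case (insert x A)
  then show ?case by (simp add: Zg_add)
qed (simp_all add: Zg_zero)

lemma Zg_Sum_any:
  assumes "\<And>x. f x \<in> Zg g"
  shows "Sum_any f \<in> Zg g"
proof (cases "finite {a. f a \<noteq> 0}")
  case True
  then show ?thesis
    using Zg_sum[of "{a. f a \<noteq> 0}" f g] assms by (simp add: Sum_any.expand_set)
qed (simp add: Sum_any.infinite Zg_zero)

definition Zg_mpolys :: "int poly \<Rightarrow> mpoly set" where
  "Zg_mpolys g = {p. \<forall>m. Poly_Mapping.lookup p m \<in> Zg g}"

lemma Zg_mpolys_add: "p \<in> Zg_mpolys g \<Longrightarrow> q \<in> Zg_mpolys g \<Longrightarrow> p + q \<in> Zg_mpolys g"
  by (simp add: Zg_mpolys_def lookup_add Zg_add)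

lemma Zg_mpolys_uminus: "p \<in> Zg_mpolys g \<Longrightarrow> - p \<in> Zg_mpolys g"
  by (simp add: Zg_mpolys_def Zg_uminus)

lemma Zg_mpolys_diff: "p \<in> Zg_mpolys g \<Longrightarrow> q \<in> Zg_mpolys g \<Longrightarrow> p - q \<in> Zg_mpolys g"
  using Zg_mpolys_add[of p g "- q"] Zg_mpolys_uminus[of q g] by simp

lemma Zg_mpolys_mult:
  assumes p: "p \<in> Zg_mpolys g" and q: "q \<in> Zg_mpolys g"
  shows "p * q \<in> Zg_mpolys g"
  unfolding Zg_mpolys_def
proof (intro CollectI allI)
  fix m
  have "(Poly_Mapping.lookup q b when m = a + b) \<in> Zg g" for a b
    using q by (simp add: Zg_mpolys_def when_def Zg_zero)
  then show "Poly_Mapping.lookup (p * q) m \<in> Zg g"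
    using p unfolding lookup_mult Zg_mpolys_def by (blast intro: Zg_Sum_any Zg_mult)
qed

lemma Zg_mpolys_Const: "c \<in> Zg g \<Longrightarrow> Const c \<in> Zg_mpolys g"
  by (simp add: Zg_mpolys_def Const_def lookup_single when_def Zg_zero)

lemma Zg_mpolys_Var: "Var v \<in> Zg_mpolys g"
  by (simp add: Zg_mpolys_def Var_def lookup_single when_def Zg_zero Zg_one)

lemma Zg_mpolys_zero: "0 \<in> Zg_mpolys g"
  using Zg_mpolys_Const[OF Zg_zero] by (simp add: Const_def)

lemma Zg_mpolys_one: "1 \<in> Zg_mpolys g"
  using Zg_mpolys_Const[OF Zg_one] by simp

lemma Zg_mpolys_power: "p \<in> Zg_mpolys g \<Longrightarrow> p ^ k \<in> Zg_mpolys g"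
  by (induct k) (simp_all add: Zg_mpolys_one Zg_mpolys_mult)

lemma Zg_mpolys_sum:
  assumes "\<And>x. x \<in> A \<Longrightarrow> f x \<in> Zg_mpolys g"
  shows "sum f A \<in> Zg_mpolys g"
  using assms
proof (induct A rule: infinite_finite_induct)
  case (insert x A)
  then show ?case by (simp add: Zg_mpolys_add)
qed (simp_all add: Zg_mpolys_zero)

definition g_const :: "int poly \<Rightarrow> mpoly" where
  "g_const g = Const (map_poly of_int g)"

lemma g_const_in_Zg_mpolys: "g_const g \<in> Zg_mpolys g"
  unfolding g_const_def by (rule Zg_mpolys_Const[OF Zg_generator])

lemma Const_one_minus_g: "Const (1 - map_poly of_int g) = 1 - g_const g"
  by (simp add: Const_diff g_const_def)

definition one_minus_g_ideal :: "int poly \<Rightarrow> mpoly set" where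
  "one_minus_g_ideal g = {(1 - g_const g) * p | p. p \<in> Zg_mpolys g}"

lemma one_minus_g_idealI: "p \<in> Zg_mpolys g \<Longrightarrow> (1 - g_const g) * p \<in> one_minus_g_ideal g"
  unfolding one_minus_g_ideal_def by blast

lemma one_minus_g_ideal_subset: "one_minus_g_ideal g \<subseteq> Zg_mpolys g"
  unfolding one_minus_g_ideal_def
  by (auto intro!: Zg_mpolys_mult Zg_mpolys_diff Zg_mpolys_one g_const_in_Zg_mpolys)

lemma one_minus_g_ideal_add:
  assumes "p \<in> one_minus_g_ideal g" "q \<in> one_minus_g_ideal g"
  shows "p + q \<in> one_minus_g_ideal g"
proof -
  from assms obtain p' q' where "p = (1 - g_const g) * p'" "q = (1 - g_const g) * q'"
      "p' \<in> Zg_mpolys g" "q' \<in> Zg_mpolys g"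
    unfolding one_minus_g_ideal_def by blast
  then show ?thesis
    using one_minus_g_idealI[of "p' + q'" g] by (simp add: Zg_mpolys_add distrib_left)
qed

lemma one_minus_g_ideal_mult:
  assumes "p \<in> Zg_mpolys g" "q \<in> one_minus_g_ideal g"
  shows "p * q \<in> one_minus_g_ideal g"
proof -
  from assms obtain q' where "q = (1 - g_const g) * q'" "q' \<in> Zg_mpolys g"
    unfolding one_minus_g_ideal_def by blast
  then show ?thesis
    using assms(1) one_minus_g_idealI[of "p * q'" g] by (simp add: Zg_mpolys_mult ac_simps)
qed

lemma one_minus_g_ideal_uminus: "p \<in> one_minus_g_ideal g \<Longrightarrow> - p \<in> one_minus_g_ideal g"
  using one_minus_g_ideal_mult[OF Zg_mpolys_uminus[OF Zg_mpolys_one]] by simp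

lemma one_minus_g_ideal_zero: "0 \<in> one_minus_g_ideal g"
  using one_minus_g_idealI[OF Zg_mpolys_zero] by simp

lemma one_minus_g_ideal_sum:
  assumes "\<And>x. x \<in> A \<Longrightarrow> f x \<in> one_minus_g_ideal g"
  shows "sum f A \<in> one_minus_g_ideal g"
  using assms
proof (induct A rule: infinite_finite_induct)
  case (insert x A)
  then show ?case by (simp add: one_minus_g_ideal_add)
qed (simp_all add: one_minus_g_ideal_zero)

lemma one_minus_g_ideal_cancel:
  assumes "map_poly of_int g \<noteq> (1 :: rat poly)" "(1 - g_const g) * p \<in> one_minus_g_ideal g"
  shows "p \<in> Zg_mpolys g"
proof -
  from assms(2) obtain q where "(1 - g_const g) * p = (1 - g_const g) * q" "q \<in> Zg_mpolys g"
    unfolding one_minus_g_ideal_def by blast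
  moreover have "1 - map_poly of_int g \<noteq> (0 :: rat poly)"
    using assms(1) by simp
  ultimately show ?thesis
    using Const_mult_cancel[of "1 - map_poly of_int g" p q] by (simp add: Const_one_minus_g)
qed

definition qnum :: "int poly \<Rightarrow> nat \<Rightarrow> mpoly" where
  "qnum g k = Const (qint g k)"

lemma qnum_eq_sum: "qnum g k = (\<Sum>i<k. g_const g ^ i)"
  by (simp add: qnum_def qint_def Const_sum Const_power g_const_def)

lemma one_minus_g_mult_qnum: "(1 - g_const g) * qnum g k = 1 - g_const g ^ k"
  by (simp add: qnum_eq_sum one_diff_power_eq)

lemma geometric_sum_mult:
  fixes x :: "'a::comm_semiring_1"
  shows "(\<Sum>i<m * s. x ^ i) = (\<Sum>i<m. x ^ i) * (\<Sum>j<s. (x ^ m) ^ j)"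
proof -
  have block: "(\<Sum>i\<in>{j * m..<j * m + m}. x ^ i) = (x ^ m) ^ j * (\<Sum>i<m. x ^ i)" for j
    using sum.shift_bounds_nat_ivl[of "(^) x" 0 "j * m" m]
    by (simp add: power_add sum_distrib_left lessThan_atLeast0 ac_simps flip: power_mult)
  show ?thesis
    using sum.nat_group[of "(^) x" m s]
    by (simp add: block sum_distrib_left sum_distrib_right mult.commute)
qed

lemma sum_one_minus_powers:
  fixes x :: "'a::comm_ring_1"
  shows "(\<Sum>i<Suc m. x ^ i) + (\<Sum>i=1..m. (1 - x) * (\<Sum>j<i. x ^ j)) = of_nat (Suc m)"
proof (induct m)
  case (Suc m)
  have "(\<Sum>i<Suc (Suc m). x ^ i) + (\<Sum>i=1..Suc m. (1 - x) * (\<Sum>j<i. x ^ j))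
      = ((\<Sum>i<Suc m. x ^ i) + (\<Sum>i=1..m. (1 - x) * (\<Sum>j<i. x ^ j)))
        + (x ^ Suc m + (1 - x) * (\<Sum>j<Suc m. x ^ j))"
    by (simp add: algebra_simps)
  also have "\<dots> = of_nat (Suc m) + (x ^ Suc m + (1 - x ^ Suc m))"
    unfolding Suc one_diff_power_eq ..
  finally show ?case
    by simp
qed simp

section \<open>Logarithmic derivatives of power series\<close>

lemma fps_X_deriv_nth: "fps_nth (fps_X * fps_deriv f) n = of_nat n * fps_nth f n"
  by (cases n) simp_all

lemma fps_X_deriv_first_coeff:
  fixes E W :: "'a::comm_ring_1 fps"
  assumes "fps_X * fps_deriv E = W * E" "fps_nth E 0 = 1" "\<And>k. k < n \<Longrightarrow> fps_nth W k = 0"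
  shows "of_nat n * fps_nth E n = fps_nth W n"
proof -
  have "of_nat n * fps_nth E n = fps_nth (W * E) n"
    using arg_cong[OF assms(1), of "\<lambda>f. fps_nth f n"] by (simp only: fps_X_deriv_nth)
  also have "\<dots> = (\<Sum>i=0..n. fps_nth W i * fps_nth E (n - i))"
    by (rule fps_mult_nth)
  also have "\<dots> = (\<Sum>i=0..n. if i = n then fps_nth W n else 0)"
    using assms(2,3) by (intro sum.cong) auto
  finally show ?thesis
    by simp
qed

definition fps_dilate :: "nat \<Rightarrow> 'a::zero fps \<Rightarrow> 'a fps" where
  "fps_dilate d f = Abs_fps (\<lambda>n. if d dvd n then fps_nth f (n div d) else 0)"

lemma fps_dilate_nth: "fps_nth (fps_dilate d f) n = (if d dvd n then fps_nth f (n div d) else 0)"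
  by (simp add: fps_dilate_def)

lemma fps_dilate_mult:
  fixes f g :: "'a::comm_ring_1 fps"
  assumes "d > 0"
  shows "fps_dilate d (f * g) = fps_dilate d f * fps_dilate d g"
proof (rule fps_ext)
  fix n
  let ?term = "\<lambda>i. fps_nth (fps_dilate d f) i * fps_nth (fps_dilate d g) (n - i)"
  show "fps_nth (fps_dilate d (f * g)) n = fps_nth (fps_dilate d f * fps_dilate d g) n"
  proof (cases "d dvd n")
    case True
    then obtain m where n: "n = d * m" by blast
    have "fps_nth (fps_dilate d f * fps_dilate d g) n = (\<Sum>i\<in>(\<lambda>j. d * j) ` {0..m}. ?term i)"
      unfolding fps_mult_nth
    proof (rule sum.mono_neutral_right)
      show "\<forall>i\<in>{0..n} - (\<lambda>j. d * j) ` {0..m}. ?term i = 0"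
        using n assms by (auto simp: fps_dilate_nth)
    qed (use n in auto)
    also have "\<dots> = (\<Sum>j=0..m. fps_nth f j * fps_nth g (m - j))"
      using assms n by (subst sum.reindex) (auto simp: inj_on_def fps_dilate_nth diff_mult_distrib2[symmetric])
    finally show ?thesis
      using n assms by (simp add: fps_dilate_nth fps_mult_nth)
  next
    case False
    have "?term i = 0" if "i \<le> n" for i
      using False that dvd_add[of d i "n - i"] by (auto simp: fps_dilate_nth)
    then show ?thesis
      using False by (simp add: fps_mult_nth fps_dilate_nth)
  qed
qed

lemma fps_X_deriv_dilate:
  fixes f :: "'a::comm_ring_1 fps"
  shows "fps_X * fps_deriv (fps_dilate d f) = fps_const (of_nat d) * fps_dilate d (fps_X * fps_deriv f)"
  by (rule fps_ext) (auto simp: fps_X_deriv_nth fps_dilate_nth elim!: dvdE)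

definition basic_series :: "'a \<Rightarrow> 'a \<Rightarrow> 'a::comm_ring_1 fps" where
  "basic_series t a = Abs_fps (\<lambda>n. if n = 0 then 1 else (1 - t) * a ^ n)"

lemma fps_X_deriv_basic_series:
  "fps_X * fps_deriv (basic_series t a)
     = Abs_fps (\<lambda>n. (1 - t) * (\<Sum>i<n. t ^ i) * a ^ n) * basic_series t a"
    (is "_ = ?V * ?H")
proof (rule fps_ext)
  fix n
  show "fps_nth (fps_X * fps_deriv ?H) n = fps_nth (?V * ?H) n"
  proof (cases n)
    case (Suc m)
    have "fps_nth (?V * ?H) n = (\<Sum>i=1..m. fps_nth ?V i * fps_nth ?H (n - i)) + fps_nth ?V n"
      by (simp add: fps_mult_nth Suc sum.atLeast0_atMost_Suc sum.atLeast_Suc_atMost basic_series_def)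
    also have "(\<Sum>i=1..m. fps_nth ?V i * fps_nth ?H (n - i))
        = (\<Sum>i=1..m. (1 - t) * a ^ n * ((1 - t) * (\<Sum>j<i. t ^ j)))"
    proof (rule sum.cong)
      fix i assume "i \<in> {1..m}"
      then have pow: "a ^ n = a ^ i * a ^ (n - i)" and pos: "n - i \<noteq> 0"
        by (simp_all add: Suc flip: power_add)
      show "fps_nth ?V i * fps_nth ?H (n - i) = (1 - t) * a ^ n * ((1 - t) * (\<Sum>j<i. t ^ j))"
        unfolding pow using pos by (simp add: basic_series_def ac_simps)
    qed simp
    also have "\<dots> + fps_nth ?V n
        = (1 - t) * a ^ n * ((\<Sum>i<n. t ^ i) + (\<Sum>i=1..m. (1 - t) * (\<Sum>j<i. t ^ j)))"
      unfolding sum_distrib_left[symmetric] by (simp del: sum.lessThan_Suc add: distrib_left ac_simps)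
    also have "\<dots> = of_nat n * fps_nth ?H n"
      unfolding Suc sum_one_minus_powers by (simp add: basic_series_def)
    finally show ?thesis
      by (simp add: fps_X_deriv_nth)
  qed (simp add: fps_mult_nth basic_series_def)
qed

section \<open>Integral ghost sequences\<close>

definition cong_one_series :: "int poly \<Rightarrow> mpoly fps \<Rightarrow> bool" where
  "cong_one_series g E \<longleftrightarrow> fps_nth E 0 = 1 \<and> (\<forall>n\<ge>1. fps_nth E n \<in> one_minus_g_ideal g)"

lemma cong_one_series_nth: "cong_one_series g E \<Longrightarrow> fps_nth E n \<in> Zg_mpolys g"
  using one_minus_g_ideal_subset[of g]
  by (cases n) (auto simp: cong_one_series_def Zg_mpolys_one)

lemma cong_one_series_one: "cong_one_series g 1"
  by (simp add: cong_one_series_def one_minus_g_ideal_zero)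

lemma cong_one_series_mult:
  assumes E: "cong_one_series g E" and D: "cong_one_series g D"
  shows "cong_one_series g (E * D)"
proof -
  have "fps_nth (E * D) n \<in> one_minus_g_ideal g" if "n \<ge> 1" for n
    unfolding fps_mult_nth
  proof (rule one_minus_g_ideal_sum)
    fix i assume "i \<in> {0..n}"
    show "fps_nth E i * fps_nth D (n - i) \<in> one_minus_g_ideal g"
    proof (cases "i = 0")
      case True
      then show ?thesis
        using E D that by (simp add: cong_one_series_def)
    next
      case False
      then have "fps_nth D (n - i) * fps_nth E i \<in> one_minus_g_ideal g"
        using E D by (intro one_minus_g_ideal_mult cong_one_series_nth) (simp_all add: cong_one_series_def)
      then show ?thesis
        by (simp add: mult.commute)
    qed
  qed
  with E D show ?thesis
    by (simp add: cong_one_series_def)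
qed

lemma cong_one_series_right_inverse:
  assumes E: "cong_one_series g E"
  shows "cong_one_series g (fps_right_inverse E 1)"
proof -
  have "fps_nth (fps_right_inverse E 1) n \<in> one_minus_g_ideal g" if "n \<ge> 1" for n
    using that
  proof (induct n rule: less_induct)
    case (less n)
    then obtain m where n: "n = Suc m"
      by (cases n) auto
    have lower: "fps_nth (fps_right_inverse E 1) k \<in> Zg_mpolys g" if "k < n" for k
      using less that one_minus_g_ideal_subset[of g] by (cases "k = 0") (auto simp: Zg_mpolys_one)
    have "(\<Sum>i=1..n. fps_nth E i * fps_right_inverse_constructor E 1 (n - i)) \<in> one_minus_g_ideal g"
    proof (rule one_minus_g_ideal_sum)
      fix i assume "i \<in> {1..n}"
      then have "fps_right_inverse_constructor E 1 (n - i) * fps_nth E i \<in> one_minus_g_ideal g"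
        using E lower[of "n - i"] by (intro one_minus_g_ideal_mult) (auto simp: cong_one_series_def)
      then show "fps_nth E i * fps_right_inverse_constructor E 1 (n - i) \<in> one_minus_g_ideal g"
        by (simp add: mult.commute)
    qed
    moreover have "fps_nth (fps_right_inverse E 1) n
        = - (\<Sum>i=1..n. fps_nth E i * fps_right_inverse_constructor E 1 (n - i))"
      by (simp only: n fps_nth_Abs_fps fps_right_inverse_constructor.simps mult_minus1)
    ultimately show ?case
      by (simp only: one_minus_g_ideal_uminus)
  qed
  then show ?thesis
    by (simp add: cong_one_series_def)
qed

lemma cong_one_series_dilate:
  assumes "d > 0" "cong_one_series g E"
  shows "cong_one_series g (fps_dilate d E)"
  using assms by (auto simp: cong_one_series_def fps_dilate_nth one_minus_g_ideal_zero elim!: dvdE)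

lemma cong_one_series_basic_series:
  "a \<in> Zg_mpolys g \<Longrightarrow> cong_one_series g (basic_series (g_const g) a)"
  by (simp add: cong_one_series_def basic_series_def one_minus_g_idealI Zg_mpolys_power)

text \<open>Index 0 is excluded: there ghost components are junk sums over all divisors of 0.\<close>

definition ghost_series :: "int poly \<Rightarrow> (nat \<Rightarrow> mpoly) \<Rightarrow> mpoly fps" where
  "ghost_series g w = Abs_fps (\<lambda>n. if n = 0 then 0 else (1 - g_const g) * w n)"

definition integral_ghost :: "int poly \<Rightarrow> (nat \<Rightarrow> mpoly) \<Rightarrow> bool" where
  "integral_ghost g w \<longleftrightarrow>
     (\<exists>E. cong_one_series g E \<and> fps_X * fps_deriv E = ghost_series g w * E)"

lemma integral_ghostE:
  assumes "integral_ghost g w"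
  obtains E where "cong_one_series g E" "fps_X * fps_deriv E = ghost_series g w * E"
  using assms unfolding integral_ghost_def by blast

lemma integral_ghost_zero: "integral_ghost g (\<lambda>_. 0)"
proof -
  have "ghost_series g (\<lambda>_. 0) = 0"
    by (rule fps_ext) (simp add: ghost_series_def)
  then show ?thesis
    unfolding integral_ghost_def using cong_one_series_one by fastforce
qed

lemma integral_ghost_add:
  assumes "integral_ghost g v" "integral_ghost g w"
  shows "integral_ghost g (\<lambda>n. v n + w n)"
proof -
  obtain E where E: "cong_one_series g E" "fps_X * fps_deriv E = ghost_series g v * E"
    using assms(1) by (rule integral_ghostE)
  obtain D where D: "cong_one_series g D" "fps_X * fps_deriv D = ghost_series g w * D"
    using assms(2) by (rule integral_ghostE)
  have "ghost_series g (\<lambda>n. v n + w n) = ghost_series g v + ghost_series g w"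
    by (rule fps_ext) (simp add: ghost_series_def algebra_simps)
  then have "fps_X * fps_deriv (E * D) = ghost_series g (\<lambda>n. v n + w n) * (E * D)"
    using E(2) D(2) by (simp add: fps_deriv_mult algebra_simps)
  then show ?thesis
    unfolding integral_ghost_def using cong_one_series_mult[OF E(1) D(1)] by blast
qed

lemma integral_ghost_uminus:
  assumes "integral_ghost g w"
  shows "integral_ghost g (\<lambda>n. - w n)"
proof -
  obtain E where E: "cong_one_series g E" "fps_X * fps_deriv E = ghost_series g w * E"
    using assms by (rule integral_ghostE)
  define D where "D = fps_right_inverse E 1"
  have ED: "E * D = 1"
    unfolding D_def using E(1) by (intro fps_right_inverse) (simp add: cong_one_series_def)
  have "fps_deriv (E * D) = 0"
    by (simp add: ED)
  then have deriv_D: "E * fps_deriv D = - (fps_deriv E * D)"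
    by (simp add: fps_deriv_mult add_eq_0_iff)
  have "fps_X * fps_deriv D = (fps_X * fps_deriv D) * (E * D)"
    by (simp add: ED)
  also have "\<dots> = - ((fps_X * fps_deriv E) * D) * D"
    by (simp add: deriv_D algebra_simps flip: mult.assoc[of fps_X])
  also have "\<dots> = - (ghost_series g w * (E * D)) * D"
    unfolding E(2) by (simp add: algebra_simps)
  also have "\<dots> = ghost_series g (\<lambda>n. - w n) * D"
  proof -
    have "ghost_series g (\<lambda>n. - w n) = - ghost_series g w"
      by (rule fps_ext) (simp add: ghost_series_def)
    then show ?thesis
      by (simp add: ED)
  qed
  finally show ?thesis
    unfolding integral_ghost_def D_def using cong_one_series_right_inverse[OF E(1)] by blast
qed

lemma integral_ghost_diff:
  "integral_ghost g v \<Longrightarrow> integral_ghost g w \<Longrightarrow> integral_ghost g (\<lambda>n. v n - w n)"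
  using integral_ghost_add[of g v "\<lambda>n. - w n"] integral_ghost_uminus[of g w] by simp

lemma integral_ghost_sum:
  assumes "\<And>i. i \<in> A \<Longrightarrow> integral_ghost g (w i)"
  shows "integral_ghost g (\<lambda>n. \<Sum>i\<in>A. w i n)"
  using assms
proof (induct A rule: infinite_finite_induct)
  case (insert i A)
  then show ?case
    using integral_ghost_add[of g "w i" "\<lambda>n. \<Sum>i\<in>A. w i n"] by simp
qed (simp_all add: integral_ghost_zero)

lemma integral_ghost_of_nat_mult:
  "integral_ghost g w \<Longrightarrow> integral_ghost g (\<lambda>n. of_nat k * w n)"
  using integral_ghost_sum[of "{..<k}" g "\<lambda>_. w"] by simp

definition ghost_term :: "int poly \<Rightarrow> nat \<Rightarrow> mpoly \<Rightarrow> nat \<Rightarrow> mpoly" where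
  "ghost_term g d a n = (if d dvd n then of_nat d * qnum g (n div d) * a ^ (n div d) else 0)"

lemma integral_ghost_ghost_term:
  assumes "d > 0" "a \<in> Zg_mpolys g"
  shows "integral_ghost g (ghost_term g d a)"
proof -
  let ?H = "basic_series (g_const g) a"
  let ?V = "Abs_fps (\<lambda>n. (1 - g_const g) * (\<Sum>i<n. g_const g ^ i) * a ^ n)"
  have "ghost_series g (ghost_term g d a) = fps_const (of_nat d) * fps_dilate d ?V"
    by (rule fps_ext) (auto simp: ghost_series_def ghost_term_def fps_dilate_nth qnum_eq_sum ac_simps)
  then have "fps_X * fps_deriv (fps_dilate d ?H) = ghost_series g (ghost_term g d a) * fps_dilate d ?H"
    by (simp add: fps_X_deriv_dilate fps_X_deriv_basic_series fps_dilate_mult[OF assms(1)])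
  then show ?thesis
    unfolding integral_ghost_def
    using cong_one_series_dilate[OF assms(1) cong_one_series_basic_series[OF assms(2)]] by blast
qed

lemma ghost_term_multiple: "d > 0 \<Longrightarrow> ghost_term g d a (d * k) = of_nat d * qnum g k * a ^ k"
  by (simp add: ghost_term_def)

text \<open>With n = lcm(d, e) m and u = g^m, both sides equal
  gcd(d, e) lcm(d, e) [m]_g (1 - u^r)(1 + u + ... + u^(s-1)) a^(r m) b^(s m).\<close>

lemma one_minus_g_mult_ghost_terms:
  fixes a b :: mpoly
  assumes "d > 0" "e > 0"
  defines "r \<equiv> lcm d e div d" and "s \<equiv> lcm d e div e"
  defines "c \<equiv> a ^ r * b ^ s"
  shows "(1 - g_const g) * ghost_term g d a n * ghost_term g e b n
    = of_nat (gcd d e) * (\<Sum>j<s. ghost_term g (lcm d e) (g_const g ^ j * c) n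
                                - ghost_term g (lcm d e) (g_const g ^ (r + j) * c) n)"
proof (cases "lcm d e dvd n")
  case False
  then have "\<not> (d dvd n \<and> e dvd n)"
    using lcm_least by blast
  then show ?thesis
    using False by (auto simp: ghost_term_def)
next
  case True
  let ?t = "g_const g" and ?l = "lcm d e"
  obtain m where n: "n = ?l * m"
    using True by blast
  let ?c = "a ^ (r * m) * b ^ (s * m)"
  define u where "u = ?t ^ m"
  have "n = d * (r * m)"
    unfolding n by (simp add: r_def mult.assoc[symmetric])
  with assms(1) have term_d: "ghost_term g d a n = of_nat d * qnum g (r * m) * a ^ (r * m)"
    by (simp only: ghost_term_multiple)
  have "n = e * (s * m)"
    unfolding n by (simp add: s_def mult.assoc[symmetric])
  with assms(2) have term_e: "ghost_term g e b n = of_nat e * qnum g (s * m) * b ^ (s * m)"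
    by (simp only: ghost_term_multiple)
  have "?t ^ (r * m) = u ^ r"
    unfolding u_def by (metis mult.commute power_mult)
  then have q_r: "(1 - ?t) * qnum g (r * m) = 1 - u ^ r"
    by (simp add: one_minus_g_mult_qnum)
  have q_s: "qnum g (s * m) = qnum g m * (\<Sum>j<s. u ^ j)"
    unfolding qnum_eq_sum u_def mult.commute[of s m] by (rule geometric_sum_mult)
  have de: "of_nat d * of_nat e = (of_nat (gcd d e) * of_nat ?l :: mpoly)"
    by (metis of_nat_mult prod_gcd_lcm_nat)
  have "?l > 0"
    using assms(1,2) by (simp add: lcm_pos_nat)
  then have "ghost_term g ?l x n = of_nat ?l * qnum g m * x ^ m" for x
    unfolding n by (rule ghost_term_multiple)
  moreover have "(?t ^ k * c) ^ m = u ^ k * ?c" for k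
    by (simp add: c_def u_def power_mult_distrib ac_simps flip: power_mult)
  ultimately have lcm_terms: "ghost_term g ?l (?t ^ k * c) n = of_nat ?l * qnum g m * (u ^ k * ?c)"
    for k by simp
  have "(1 - ?t) * ghost_term g d a n * ghost_term g e b n
      = (of_nat d * of_nat e) * ((1 - ?t) * qnum g (r * m)) * qnum g (s * m) * ?c"
    unfolding term_d term_e by (simp only: ac_simps)
  also have "\<dots> = of_nat (gcd d e) * (\<Sum>j<s. of_nat ?l * qnum g m * (1 - u ^ r) * ?c * u ^ j)"
    unfolding de q_r q_s by (simp add: sum_distrib_left sum_distrib_right ac_simps)
  also have "\<dots> = of_nat (gcd d e) * (\<Sum>j<s. ghost_term g ?l (?t ^ j * c) n
                                      - ghost_term g ?l (?t ^ (r + j) * c) n)"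
    unfolding lcm_terms by (simp add: power_add algebra_simps)
  finally show ?thesis .
qed

lemma integral_ghost_ghost_term_product:
  assumes "d > 0" "e > 0" "a \<in> Zg_mpolys g" "b \<in> Zg_mpolys g"
  shows "integral_ghost g (\<lambda>n. (1 - g_const g) * ghost_term g d a n * ghost_term g e b n)"
  unfolding one_minus_g_mult_ghost_terms[OF assms(1,2)] using assms
  by (intro integral_ghost_of_nat_mult integral_ghost_sum integral_ghost_diff integral_ghost_ghost_term
      Zg_mpolys_mult Zg_mpolys_power g_const_in_Zg_mpolys) (simp_all add: lcm_pos_nat)

section \<open>Integrality from ghost components\<close>

definition ghost_trunc :: "int poly \<Rightarrow> (nat \<Rightarrow> mpoly) \<Rightarrow> nat \<Rightarrow> nat \<Rightarrow> mpoly" where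
  "ghost_trunc g F N n = (\<Sum>d\<in>{1..N}. ghost_term g d (F d) n)"

lemma ghost_eq_ghost_trunc:
  assumes "1 \<le> n" "n \<le> N"
  shows "ghost g F n = ghost_trunc g F N n"
proof -
  have divisors: "{d. d dvd n} = {d \<in> {1..N}. d dvd n}"
    using assms by (auto dest: dvd_imp_le intro: Nat.gr0I)
  show ?thesis
    unfolding ghost_def ghost_trunc_def ghost_term_def qnum_def divisors
    by (rule sum.inter_filter) simp
qed

lemma ghost_eq_top_plus_trunc:
  assumes "n \<ge> 1"
  shows "ghost g F n = of_nat n * F n + ghost_trunc g F (n - 1) n"
proof -
  have "{1..n} = insert n {1..n - 1}"
    using assms by auto
  then have "ghost_trunc g F n n = ghost_term g n (F n) n + ghost_trunc g F (n - 1) n"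
    unfolding ghost_trunc_def using assms by simp
  then show ?thesis
    using assms by (simp add: ghost_eq_ghost_trunc[of n n] ghost_term_def qnum_eq_sum)
qed

lemma integral_ghost_ghost_trunc:
  assumes "\<And>d. d \<in> {1..N} \<Longrightarrow> F d \<in> Zg_mpolys g"
  shows "integral_ghost g (ghost_trunc g F N)"
  unfolding ghost_trunc_def using assms
  by (intro integral_ghost_sum integral_ghost_ghost_term) auto

lemma integral_ghost_ghost_trunc_product:
  assumes "\<And>d. d \<in> {1..N} \<Longrightarrow> F d \<in> Zg_mpolys g" "\<And>d. d \<in> {1..N} \<Longrightarrow> G d \<in> Zg_mpolys g"
  shows "integral_ghost g (\<lambda>n. (1 - g_const g) * ghost_trunc g F N n * ghost_trunc g G N n)"
proof -
  have "(1 - g_const g) * ghost_trunc g F N n * ghost_trunc g G N n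
      = (\<Sum>d\<in>{1..N}. \<Sum>e\<in>{1..N}. (1 - g_const g) * ghost_term g d (F d) n * ghost_term g e (G e) n)"
    for n
    unfolding ghost_trunc_def mult.assoc sum_product by (simp only: sum_distrib_left)
  then show ?thesis
    using assms by (simp only:) (intro integral_ghost_sum integral_ghost_ghost_term_product; simp)
qed

lemma Zg_mpolys_of_integral_ghost:
  assumes g: "map_poly of_int g \<noteq> (1 :: rat poly)"
    and integral: "\<And>N. \<exists>w. integral_ghost g w \<and> (\<forall>n\<in>{1..N}. w n = ghost g F n)"
    and "n \<ge> 1"
  shows "F n \<in> Zg_mpolys g"
  using assms(3)
proof (induct n rule: less_induct)
  case (less n)
  obtain w where w: "integral_ghost g w" "\<forall>k\<in>{1..n}. w k = ghost g F k"
    using integral by blast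
  let ?v = "\<lambda>k. w k - ghost_trunc g F (n - 1) k"
  have "integral_ghost g ?v"
    using less by (intro integral_ghost_diff w(1) integral_ghost_ghost_trunc) auto
  then obtain E where E: "cong_one_series g E" "fps_X * fps_deriv E = ghost_series g ?v * E"
    by (rule integral_ghostE)
  have "of_nat n * fps_nth E n = fps_nth (ghost_series g ?v) n"
  proof (rule fps_X_deriv_first_coeff[OF E(2)])
    show "fps_nth E 0 = 1"
      using E(1) by (simp add: cong_one_series_def)
    show "fps_nth (ghost_series g ?v) k = 0" if "k < n" for k
      using w(2) that ghost_eq_ghost_trunc[of k "n - 1" g F] by (simp add: ghost_series_def)
  qed
  also have "\<dots> = of_nat n * ((1 - g_const g) * F n)"
    using w(2) less.prems by (simp add: ghost_series_def ghost_eq_top_plus_trunc algebra_simps)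
  finally have "fps_nth E n = (1 - g_const g) * F n"
    by (rule of_nat_mult_cancel_mpoly) (use less.prems in simp)
  moreover have "fps_nth E n \<in> one_minus_g_ideal g"
    using E(1) less.prems by (simp add: cong_one_series_def)
  ultimately show ?case
    using one_minus_g_ideal_cancel[OF g] by simp
qed

lemma ghost_of_g_eq_1:
  assumes "map_poly of_int g = (1 :: rat poly)"
  shows "ghost g F n = of_nat n * (\<Sum>d | d dvd n. F d ^ (n div d))"
proof -
  have "of_nat d * Const (qint g (n div d)) = (of_nat n :: mpoly)" if "d dvd n" for d
    using that assms by (auto simp: qint_def Const_of_nat simp flip: of_nat_mult)
  then show ?thesis
    unfolding ghost_def sum_distrib_left by (intro sum.cong) auto
qed

lemma ghost_divisible_of_g_eq_1:
  assumes "map_poly of_int g = (1 :: rat poly)" "\<And>d. d \<ge> 1 \<Longrightarrow> F d \<in> Zg_mpolys g" "n \<ge> 1"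
  shows "\<exists>r\<in>Zg_mpolys g. ghost g F n = of_nat n * r"
proof -
  have "d \<ge> 1" if "d dvd n" for d
    using that assms(3) by (cases "d = 0") auto
  then have "(\<Sum>d | d dvd n. F d ^ (n div d)) \<in> Zg_mpolys g"
    using assms(2) by (intro Zg_mpolys_sum Zg_mpolys_power) simp
  then show ?thesis
    unfolding ghost_of_g_eq_1[OF assms(1)] by blast
qed

lemma Zg_mpolys_of_ghost_divisible:
  assumes g: "map_poly of_int g = (1 :: rat poly)"
    and divisible: "\<And>n. n \<ge> 1 \<Longrightarrow> \<exists>r\<in>Zg_mpolys g. ghost g F n = of_nat n * r"
    and "n \<ge> 1"
  shows "F n \<in> Zg_mpolys g"
  using assms(3)
proof (induct n rule: less_induct)
  case (less n)
  obtain r where r: "r \<in> Zg_mpolys g" "ghost g F n = of_nat n * r"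
    using divisible less.prems by blast
  define Q where "Q = (\<Sum>d \<in> {d. d dvd n} - {n}. F d ^ (n div d))"
  have "finite {d. d dvd n}"
    using less.prems by simp
  then have "ghost g F n = of_nat n * (F n + Q)"
    unfolding ghost_of_g_eq_1[OF g] Q_def using less.prems by (simp add: sum.remove[of _ n])
  then have "F n = r - Q"
    using r(2) less.prems of_nat_mult_cancel_mpoly[of n "F n + Q" r] by (simp add: algebra_simps)
  moreover have "Q \<in> Zg_mpolys g"
    unfolding Q_def using less
    by (intro Zg_mpolys_sum Zg_mpolys_power) (auto intro: Nat.gr0I dest: dvd_imp_le)
  ultimately show ?case
    using r(1) by (simp add: Zg_mpolys_diff)
qed

lemma Zg_mpolys_of_ghost_add:
  assumes F: "\<And>d. d \<ge> 1 \<Longrightarrow> F d \<in> Zg_mpolys g" and G: "\<And>d. d \<ge> 1 \<Longrightarrow> G d \<in> Zg_mpolys g"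
    and S: "\<And>n. n \<ge> 1 \<Longrightarrow> ghost g S n = ghost g F n + ghost g G n"
    and n: "n \<ge> 1"
  shows "S n \<in> Zg_mpolys g"
proof (cases "map_poly of_int g = (1 :: rat poly)")
  case True
  have "\<exists>r\<in>Zg_mpolys g. ghost g S k = of_nat k * r" if k: "k \<ge> 1" for k
  proof -
    obtain r1 r2 where "r1 \<in> Zg_mpolys g" "ghost g F k = of_nat k * r1"
        "r2 \<in> Zg_mpolys g" "ghost g G k = of_nat k * r2"
      using ghost_divisible_of_g_eq_1[of g F k, OF True F k] ghost_divisible_of_g_eq_1[of g G k, OF True G k]
      by blast
    then show ?thesis
      using S[OF k] by (intro bexI[of _ "r1 + r2"]) (simp_all add: distrib_left Zg_mpolys_add)
  qed
  then show ?thesis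
    using Zg_mpolys_of_ghost_divisible[OF True _ n] by blast
next
  case False
  have "\<exists>w. integral_ghost g w \<and> (\<forall>n\<in>{1..N}. w n = ghost g S n)" for N
    using F G
    by (intro exI[of _ "\<lambda>n. ghost_trunc g F N n + ghost_trunc g G N n"] conjI ballI
        integral_ghost_add integral_ghost_ghost_trunc) (auto simp: S ghost_eq_ghost_trunc)
  then show ?thesis
    using Zg_mpolys_of_integral_ghost[OF False _ n] by blast
qed

lemma Zg_mpolys_of_ghost_mult:
  assumes F: "\<And>d. d \<ge> 1 \<Longrightarrow> F d \<in> Zg_mpolys g" and G: "\<And>d. d \<ge> 1 \<Longrightarrow> G d \<in> Zg_mpolys g"
    and P: "\<And>n. n \<ge> 1 \<Longrightarrow>
      ghost g P n = Const (1 - map_poly of_int g) * ghost g F n * ghost g G n"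
    and n: "n \<ge> 1"
  shows "P n \<in> Zg_mpolys g"
proof (cases "map_poly of_int g = (1 :: rat poly)")
  case True
  have "ghost g P k = of_nat k * 0" if "k \<ge> 1" for k
    using P[OF that] True by (simp add: Const_def)
  then show ?thesis
    using Zg_mpolys_of_ghost_divisible[OF True _ n] Zg_mpolys_zero by blast
next
  case False
  have "\<exists>w. integral_ghost g w \<and> (\<forall>n\<in>{1..N}. w n = ghost g P n)" for N
    using F G
    by (intro exI[of _ "\<lambda>n. (1 - g_const g) * ghost_trunc g F N n * ghost_trunc g G N n"] conjI ballI
        integral_ghost_ghost_trunc_product) (auto simp: P Const_one_minus_g ghost_eq_ghost_trunc)
  then show ?thesis
    using Zg_mpolys_of_integral_ghost[OF False _ n] by blast
qed

lemma Zg_mpolys_of_ghost_neg: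
  assumes F: "\<And>d. d \<ge> 1 \<Longrightarrow> F d \<in> Zg_mpolys g"
    and I: "\<And>n. n \<ge> 1 \<Longrightarrow> ghost g I n = - ghost g F n"
    and n: "n \<ge> 1"
  shows "I n \<in> Zg_mpolys g"
proof (cases "map_poly of_int g = (1 :: rat poly)")
  case True
  have "\<exists>r\<in>Zg_mpolys g. ghost g I k = of_nat k * r" if "k \<ge> 1" for k
    using ghost_divisible_of_g_eq_1[of g F k, OF True F that] I[OF that]
    by (auto intro: Zg_mpolys_uminus simp flip: mult_minus_right)
  then show ?thesis
    using Zg_mpolys_of_ghost_divisible[OF True _ n] by blast
next
  case False
  have "\<exists>w. integral_ghost g w \<and> (\<forall>n\<in>{1..N}. w n = ghost g I n)" for N
    using F
    by (intro exI[of _ "\<lambda>n. - ghost_trunc g F N n"] conjI ballI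
        integral_ghost_uminus integral_ghost_ghost_trunc) (auto simp: I ghost_eq_ghost_trunc)
  then show ?thesis
    using Zg_mpolys_of_integral_ghost[OF False _ n] by blast
qed

section \<open>Variables\<close>

definition vars_in :: "var set \<Rightarrow> mpoly \<Rightarrow> bool" where
  "vars_in V p \<longleftrightarrow> (\<forall>m\<in>Poly_Mapping.keys p. Poly_Mapping.keys m \<subseteq> V)"

lemma vars_in_zero: "vars_in V 0"
  by (simp add: vars_in_def)

lemma vars_in_add: "vars_in V p \<Longrightarrow> vars_in V q \<Longrightarrow> vars_in V (p + q)"
  unfolding vars_in_def using keys_add[of p q] by blast

lemma vars_in_uminus: "vars_in V p \<Longrightarrow> vars_in V (- p)"
  unfolding vars_in_def by simp

lemma vars_in_diff: "vars_in V p \<Longrightarrow> vars_in V q \<Longrightarrow> vars_in V (p - q)"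
  using vars_in_add[of V p "- q"] vars_in_uminus[of V q] by simp

lemma vars_in_mult:
  assumes "vars_in V p" "vars_in V q"
  shows "vars_in V (p * q)"
  unfolding vars_in_def
proof
  fix m assume "m \<in> Poly_Mapping.keys (p * q)"
  then obtain a b where "m = a + b" "a \<in> Poly_Mapping.keys p" "b \<in> Poly_Mapping.keys q"
    using keys_mult[of p q] by blast
  then show "Poly_Mapping.keys m \<subseteq> V"
    using assms keys_add[of a b] unfolding vars_in_def by blast
qed

lemma vars_in_Const: "vars_in V (Const c)"
  by (simp add: vars_in_def Const_def)

lemma vars_in_Var: "v \<in> V \<Longrightarrow> vars_in V (Var v)"
  by (simp add: vars_in_def Var_def)

lemma vars_in_power: "vars_in V p \<Longrightarrow> vars_in V (p ^ k)"
  using vars_in_Const[of V 1] by (induct k) (simp_all add: vars_in_mult)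

lemma vars_in_sum: "(\<And>x. x \<in> A \<Longrightarrow> vars_in V (f x)) \<Longrightarrow> vars_in V (sum f A)"
proof (induct A rule: infinite_finite_induct)
  case (insert x A)
  then show ?case by (simp add: vars_in_add)
qed (simp_all add: vars_in_zero)

lemma vars_in_mono: "vars_in V p \<Longrightarrow> V \<subseteq> W \<Longrightarrow> vars_in W p"
  unfolding vars_in_def by blast

lemma vars_in_Const_mult_iff:
  assumes "c \<noteq> 0"
  shows "vars_in V (Const c * p) \<longleftrightarrow> vars_in V p"
proof -
  have "Poly_Mapping.keys (Const c * p) = Poly_Mapping.keys p"
    using assms by (auto simp: in_keys_iff lookup_Const_mult)
  then show ?thesis
    by (simp add: vars_in_def)
qed

lemma vars_in_ghost_Var:
  assumes "\<And>d. d dvd n \<Longrightarrow> f d \<in> V"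
  shows "vars_in V (ghost g (\<lambda>d. Var (f d)) n)"
  unfolding ghost_def using assms
  by (intro vars_in_sum vars_in_mult vars_in_power vars_in_Var) (simp_all add: vars_in_Const flip: Const_of_nat)

lemma vars_in_of_ghost:
  assumes mono: "\<And>d n. d dvd n \<Longrightarrow> V d \<subseteq> V n"
    and ghost_vars: "\<And>n. n \<ge> 1 \<Longrightarrow> vars_in (V n) (ghost g F n)"
    and "n \<ge> 1"
  shows "vars_in (V n) (F n)"
  using assms(3)
proof (induct n rule: less_induct)
  case (less n)
  have "vars_in (V n) (ghost_term g d (F d) n)" if "d \<in> {1..n - 1}" for d
  proof (cases "d dvd n")
    case True
    from that less.prems have "d < n" "1 \<le> d"
      by auto
    then have "vars_in (V d) (F d)"
      by (rule less.hyps)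
    then have "vars_in (V n) (F d)"
      using mono[OF True] by (rule vars_in_mono)
    with True show ?thesis
      by (simp add: ghost_term_def qnum_def vars_in_mult vars_in_power vars_in_Const flip: Const_of_nat)
  qed (simp add: ghost_term_def vars_in_zero)
  then have "vars_in (V n) (ghost g F n - ghost_trunc g F (n - 1) n)"
    unfolding ghost_trunc_def using ghost_vars[OF less.prems] by (intro vars_in_diff vars_in_sum)
  then show ?case
    using less.prems vars_in_Const_mult_iff[of "of_nat n" "V n" "F n"]
    by (simp add: ghost_eq_top_plus_trunc Const_of_nat)
qed

lemma in_Zg_polyI: "p \<in> Zg_mpolys g \<Longrightarrow> vars_in V p \<Longrightarrow> in_Zg_poly g V p"
  unfolding in_Zg_poly_def Zg_mpolys_def vars_in_def by blast

theorem lemma3p3: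
  fixes g :: "int poly" and S P I :: "nat \<Rightarrow> mpoly"
  assumes hS: "\<And>n. n \<ge> 1 \<Longrightarrow>
      ghost g S n = ghost g (\<lambda>d. Var (X d)) n + ghost g (\<lambda>d. Var (Y d)) n"
    and hP: "\<And>n. n \<ge> 1 \<Longrightarrow>
      ghost g P n = Const (1 - map_poly of_int g) *
        ghost g (\<lambda>d. Var (X d)) n * ghost g (\<lambda>d. Var (Y d)) n"
    and hI: "\<And>n. n \<ge> 1 \<Longrightarrow>
      ghost g (\<lambda>d. Var (X d)) n + ghost g I n = 0"
    and n: "n \<ge> 1"
  shows "in_Zg_poly g ({X d | d. d dvd n} \<union> {Y d | d. d dvd n}) (S n)
       \<and> in_Zg_poly g ({X d | d. d dvd n} \<union> {Y d | d. d dvd n}) (P n)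
       \<and> in_Zg_poly g {X d | d. d dvd n} (I n)"
proof -
  define VXY where "VXY k = {X d | d. d dvd k} \<union> {Y d | d. d dvd k}" for k :: nat
  define VX where "VX k = {X d | d. d dvd k}" for k :: nat
  have mono: "VXY d \<subseteq> VXY k" "VX d \<subseteq> VX k" if "d dvd k" for d k
    using that dvd_trans unfolding VXY_def VX_def by blast+
  have x: "vars_in (VXY k) (ghost g (\<lambda>d. Var (X d)) k)" "vars_in (VX k) (ghost g (\<lambda>d. Var (X d)) k)"
    and y: "vars_in (VXY k) (ghost g (\<lambda>d. Var (Y d)) k)" for k
    unfolding VXY_def VX_def by (intro vars_in_ghost_Var; blast)+
  have hI': "ghost g I k = - ghost g (\<lambda>d. Var (X d)) k" if "k \<ge> 1" for k
    using hI[OF that] by (simp add: eq_neg_iff_add_eq_0 add.commute)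
  have "S n \<in> Zg_mpolys g" "P n \<in> Zg_mpolys g" "I n \<in> Zg_mpolys g"
    using Zg_mpolys_of_ghost_add[OF _ _ hS n] Zg_mpolys_of_ghost_mult[OF _ _ hP n]
      Zg_mpolys_of_ghost_neg[OF _ hI' n] by (simp_all add: Zg_mpolys_Var)
  moreover have "vars_in (VXY n) (S n)" "vars_in (VXY n) (P n)"
    using vars_in_of_ghost[of VXY g S n] vars_in_of_ghost[of VXY g P n] mono(1) n
    by (simp_all add: hS hP vars_in_add vars_in_mult vars_in_Const x y)
  moreover have "vars_in (VX n) (I n)"
    using vars_in_of_ghost[of VX g I n] mono(2) n by (simp add: hI' vars_in_uminus x)
  ultimately show ?thesis
    unfolding VXY_def VX_def by (blast intro: in_Zg_polyI)
qed

end
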